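(* In the setting described in the context, the elements $1$, $\rho$, $\gamma_j$ ($1\le j\le 6n+1$), $\delta_A$, $\delta_{B,j}^{\pm}$ ($1\le j\le 3n$) and $\delta_{C,j}^{\pm}$ ($1\le j\le 6n+1$) of $K$ are all totally positive.
   Context: For integers $m\ge0$ define integers $x_m,y_m$ by $\frac{x_m+y_m\sqrt5}{2}=\big(\frac{1+\sqrt5}{2}\big)^m$. Let $n\ge0$ be an integer such that $p:=y_{12n+3}^2-1$ and $r:=x_{12n+3}^2-1$ are squarefree, and let $K=\mathbb{Q}(\sqrt5,\sqrt p)$ (note $r=5p$, so $\sqrt r\in K$). Write $X=x_{12n+3}$, $Y=y_{12n+3}$, and $[a,b,c,d]:=a+b\sqrt5+c\sqrt p+d\sqrt r$. Define $\rho:=[\frac{X+Y}{2},0,-\frac12,\frac12]$; for $1\le j\le 6n+1$, $\gamma_j:=[\frac{y_{2j-1}X+1}{2},\frac{x_{2j-1}X-(-1)^j}{10},(-1)^j\frac{x_{2j-1}}{2},(-1)^j\frac{y_{2j-1}}{2}]$; and \[ \delta_A:=\Big[\tfrac14,-\tfrac1{20},0,-\tfrac{1}{5(X+Y)}\Big],\quad \delta_{B,j}^{\pm}:=\Big[\tfrac14,-\tfrac1{20},\pm\tfrac{X-x_{4j-1}}{20p},\mp\tfrac{X-y_{4j-1}}{4r}\Big]\ (1\le j\le 3n), \] \[ \delta_{C,j}^{\pm}:=\Big[\tfrac14,\pm\tfrac1{20},-\tfrac{Y-y_{2j-1}}{4p},\mp\tfrac{Y-x_{2j-1}}{4r}\Big]\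 (1\le j\le 6n+1). \] An element is totally positive if all four of its real conjugates are positive. *)

theory Defs
  imports Complex_Main "HOL-Computational_Algebra.Squarefree"
begin

text \<open>The integers x_m, y_m with (x_m + y_m sqrt 5)/2 = ((1 + sqrt 5)/2)^m, computed by
  the recursion obtained from multiplying by (1 + sqrt 5)/2:
  (x + y sqrt 5)/2 * (1 + sqrt 5)/2 = ((x + 5y)/2 + (x + y)/2 sqrt 5)/2.
  The lemma xy_char below certifies the defining property.\<close>
fun xy :: "nat \<Rightarrow> int \<times> int" where
  "xy 0 = (2, 0)"
| "xy (Suc m) = (case xy m of (a, b) \<Rightarrow> ((a + 5 * b) div 2, (a + b) div 2))"

definition xs :: "nat \<Rightarrow> int" where "xs m = fst (xy m)"
definition ys :: "nat \<Rightarrow> int" where "ys m = snd (xy m)"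

lemma xy_parity: "even (fst (xy m) + snd (xy m))"
proof (induction m)
  case 0 then show ?case by simp
next
  case (Suc m)
  obtain a b where ab: "xy m = (a, b)" by (cases "xy m")
  with Suc have e: "even (a + b)" by simp
  then obtain k where k: "a + b = 2 * k" by blast
  have a: "a = 2*k - b" using k by simp
  have "xy (Suc m) = (k + 2*b, k)" using ab a by simp
  then show ?case by simp
qed

lemma xy_char:
  "(real_of_int (xs m) + real_of_int (ys m) * sqrt 5) / 2 = ((1 + sqrt 5) / 2) ^ m"
proof (induction m)
  case 0 then show ?case by (simp add: xs_def ys_def)
next
  case (Suc m)
  obtain a b where ab: "xy m = (a, b)" by (cases "xy m")
  from xy_parity[of m] ab have "even (a + b)" by simp
  then obtain k where k: "a + b = 2 * k" by blast
  have a: "a = 2*k - b" using k by simp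
  have x: "xs (Suc m) = k + 2*b" using ab a by (simp add: xs_def)
  have y: "ys (Suc m) = k" using ab a by (simp add: ys_def)
  have IH: "(real_of_int a + real_of_int b * sqrt 5) / 2 = ((1 + sqrt 5) / 2) ^ m"
    using Suc ab by (simp add: xs_def ys_def)
  have s5: "sqrt 5 * sqrt 5 = (5::real)" by simp
  have "((1 + sqrt 5) / 2) ^ Suc m
      = (real_of_int a + real_of_int b * sqrt 5) / 2 * ((1 + sqrt 5) / 2)"
    using IH by simp
  also have "\<dots> = (real_of_int (k + 2*b) + real_of_int k * sqrt 5) / 2"
  proof -
    have kr: "real_of_int a + real_of_int b = 2 * real_of_int k" using k by linarith
    have "(real_of_int a + real_of_int b * sqrt 5) / 2 * ((1 + sqrt 5) / 2)
        = (real_of_int a + 5 * real_of_int b + (real_of_int a + real_of_int b) * sqrt 5) / 4"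
      by (simp add: field_simps s5)
    also have "\<dots> = (real_of_int (k + 2*b) + real_of_int k * sqrt 5) / 2"
      using kr by (simp add: field_simps)
    finally show ?thesis .
  qed
  finally show ?case using x y by simp
qed

text \<open>K = Q(sqrt 5, sqrt p), r = 5p, sqrt r = sqrt 5 * sqrt p. The element
  [a,b,c,d] = a + b sqrt 5 + c sqrt p + d sqrt r has the four real conjugates
  obtained from sqrt 5 \<mapsto> s sqrt 5, sqrt p \<mapsto> t sqrt p (s, t = \<plusminus>1),
  hence sqrt r \<mapsto> s t sqrt r.\<close>
definition conjK :: "real \<Rightarrow> real \<Rightarrow> real \<Rightarrow> real \<Rightarrow> real \<Rightarrow> real \<Rightarrow> real \<Rightarrow> real \<Rightarrow> real" where
  "conjK p r s t a b c d = a + s * b * sqrt 5 + t * c * sqrt p + s * t * d * sqrt r"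

definition totally_positive :: "real \<Rightarrow> real \<Rightarrow> real \<Rightarrow> real \<Rightarrow> real \<Rightarrow> real \<Rightarrow> bool" where
  "totally_positive p r a b c d \<longleftrightarrow>
     (\<forall>s\<in>{1, -1}. \<forall>t\<in>{1, -1}. conjK p r s t a b c d > 0)"

end

theory Submission
  imports Defs
begin

text \<open>
  The x_m and y_m are the Lucas and Fibonacci numbers: for odd m, x_m = phi^m - phi^-m and
  sqrt 5 y_m = phi^m + phi^-m. Hence with q = sqrt p we get r = 5p, X^2 - 5q^2 = 1 and
  Y^2 - q^2 = 1, and [a,b,c,d] is totally positive iff |c + d u| q < a + b u for u = sqrt 5
  and u = -sqrt 5. For rho, gamma_j and delta_A this follows from q < Y and sqrt 5 q < X.
  For delta_B and delta_C, with (Z, s) = (X, sqrt 5 q) resp. (Y, q), one embedding asks for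
  phi^m to lie in the window phi (Z - s) < phi^m < phi (Z + s), and since (Z - s)(Z + s) = 1,
  the other one asks for exactly the same window, written as a window for phi^-m.
  The window contains phi^m because phi \<le> phi^m \<le> phi min(X, Y) for 0 < m < N.
\<close>

definition phi :: real where "phi = (1 + sqrt 5) / 2"

lemma sqrt5_gt_2: "2 < sqrt (5::real)"
  by (rule real_less_rsqrt) simp

lemma sqrt5_lt_3: "sqrt (5::real) < 3"
  by (rule real_less_lsqrt) simp_all

lemma phi_gt_1: "1 < phi"
  using sqrt5_gt_2 by (simp add: phi_def)

lemma phi_squared: "phi\<^sup>2 = phi + 1"
  by (simp add: phi_def power2_eq_square field_simps)

lemma inverse_phi: "1 / phi = (sqrt 5 - 1) / 2"
proof -
  have "phi * ((sqrt 5 - 1) / 2) = 1"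
    by (simp add: phi_def algebra_simps)
  then show ?thesis
    using phi_gt_1 by (simp add: field_simps)
qed

lemma divide_phi: "x / phi = (sqrt 5 - 1) / 2 * x"
proof -
  have "x / phi = x * (1 / phi)"
    by simp
  then show ?thesis
    unfolding inverse_phi by simp
qed

lemma sqrt5_less_phi_squared: "sqrt 5 < phi\<^sup>2"
proof -
  have "sqrt 5 < phi + 1"
    using sqrt5_lt_3 by (simp add: phi_def field_simps)
  then show ?thesis
    by (simp add: phi_squared)
qed

lemma xs_ys_Suc:
  "real_of_int (xs (Suc m)) = (real_of_int (xs m) + 5 * ys m) / 2"
  "real_of_int (ys (Suc m)) = (real_of_int (xs m) + ys m) / 2"
proof -
  obtain a b where ab: "xy m = (a, b)" by (cases "xy m")
  from xy_parity[of m] ab have "even (a + b)" by simp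
  then obtain k where k: "a + b = 2 * k" by blast
  then have "xy (Suc m) = (k + 2 * b, k)" using ab by simp
  then show "real_of_int (xs (Suc m)) = (real_of_int (xs m) + 5 * ys m) / 2"
    and "real_of_int (ys (Suc m)) = (real_of_int (xs m) + ys m) / 2"
    using ab k by (simp_all add: xs_def ys_def)
qed

lemma xs_ys_conj: "(real_of_int (xs m) - ys m * sqrt 5) / 2 = ((1 - sqrt 5) / 2) ^ m"
proof (induction m)
  case 0
  then show ?case by (simp add: xs_def ys_def)
next
  case (Suc m)
  have "((1 - sqrt 5) / 2) ^ Suc m = (real_of_int (xs m) - ys m * sqrt 5) / 2 * ((1 - sqrt 5) / 2)"
    using Suc by simp
  also have "\<dots> = (real_of_int (xs (Suc m)) - ys (Suc m) * sqrt 5) / 2"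
    unfolding xs_ys_Suc by (simp add: field_simps)
  finally show ?case by simp
qed

lemma
  assumes "odd m"
  shows xs_odd: "real_of_int (xs m) = phi ^ m - 1 / phi ^ m"
    and ys_odd: "real_of_int (ys m) = (phi ^ m + 1 / phi ^ m) / sqrt 5"
proof -
  have "(1 - sqrt 5) / 2 = - (1 / phi)"
    by (simp add: inverse_phi field_simps)
  then have "((1 - sqrt 5) / 2) ^ m = - ((1 / phi) ^ m)"
    using assms by (simp add: power_minus_odd)
  then have "(real_of_int (xs m) - ys m * sqrt 5) / 2 = - (1 / phi ^ m)"
    by (simp add: xs_ys_conj power_one_over)
  moreover have "(real_of_int (xs m) + ys m * sqrt 5) / 2 = phi ^ m"
    using xy_char[of m] by (simp add: phi_def)
  ultimately show "real_of_int (xs m) = phi ^ m - 1 / phi ^ m"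
    and "real_of_int (ys m) = (phi ^ m + 1 / phi ^ m) / sqrt 5"
    by (simp_all add: field_simps)
qed

lemma totally_positive_iff:
  assumes "0 \<le> p" "r = 5 * p"
  shows "totally_positive p r a b c d \<longleftrightarrow>
    (\<forall>u \<in> {sqrt 5, - sqrt 5}. \<bar>c + d * u\<bar> * sqrt p < a + b * u)"
proof -
  have "sqrt r = sqrt 5 * sqrt p"
    using assms(2) by (simp add: real_sqrt_mult)
  then have conj: "conjK p r s t a b c d = (a + b * (s * sqrt 5)) + t * ((c + d * (s * sqrt 5)) * sqrt p)"
    for s t
    by (simp add: conjK_def algebra_simps)
  have "\<bar>v\<bar> * sqrt p < w \<longleftrightarrow> 0 < w + 1 * (v * sqrt p) \<and> 0 < w + (- 1) * (v * sqrt p)" for v w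
  proof -
    have "\<bar>v\<bar> * sqrt p = \<bar>v * sqrt p\<bar>"
      using assms(1) by (simp add: abs_mult)
    then show ?thesis
      by (simp only: abs_less_iff) linarith
  qed
  then show ?thesis
    unfolding totally_positive_def conj by auto
qed

text \<open>Inverting c (Z - s) < F < c (Z + s) with (Z - s)(Z + s) = 1 gives
  (Z - s) / c < 1 / F < (Z + s) / c.\<close>

lemma window_abs_less:
  fixes c Z s F :: real
  assumes "(Z - s) * (Z + s) = 1" "0 < s" "0 < Z" "0 < c" "c \<le> F" "F \<le> c * Z"
  shows "\<bar>c * Z - F\<bar> < c * s" and "\<bar>Z / c - 1 / F\<bar> < s / c"
proof -
  have "0 < (Z - s) * (Z + s)"
    using assms(1) by simp
  then have "0 < Z - s"
    using assms(2,3) by (simp add: zero_less_mult_iff)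
  have "Z - s < 1"
  proof (rule ccontr)
    assume ge: "\<not> Z - s < 1"
    then have "1 * (Z + s) \<le> (Z - s) * (Z + s)"
      using assms(2,3) by (intro mult_right_mono) auto
    then have "Z + s \<le> 1"
      using assms(1) by simp
    with ge assms(2) show False
      by linarith
  qed
  then have "c * (Z - s) < c * 1"
    using assms(4) by (intro mult_strict_left_mono)
  then have lower: "c * (Z - s) < F"
    using assms(5) by simp
  have upper: "F < c * (Z + s)"
    using assms(6) mult_pos_pos[OF assms(4,2)] by (simp add: algebra_simps)
  have "0 < F"
    using assms(4,5) by simp
  from lower upper show "\<bar>c * Z - F\<bar> < c * s"
    by (simp add: abs_less_iff algebra_simps)
  have inv: "Z + s = 1 / (Z - s)" "Z - s = 1 / (Z + s)"
    using assms(1-3) \<open>0 < Z - s\<close> by (simp_all add: eq_divide_eq mult.commute)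
  have "1 / F < 1 / (c * (Z - s))"
    using lower \<open>0 < F\<close> \<open>0 < Z - s\<close> assms(4) by (intro divide_strict_left_mono) auto
  then have "1 / F < (Z + s) / c"
    using inv(1) by (simp add: mult.commute)
  moreover have "1 / (c * (Z + s)) < 1 / F"
    using upper \<open>0 < F\<close> assms(2-4) by (intro divide_strict_left_mono) auto
  then have "(Z - s) / c < 1 / F"
    using inv(2) by (simp add: mult.commute)
  ultimately show "\<bar>Z / c - 1 / F\<bar> < s / c"
    by (simp add: abs_less_iff diff_divide_distrib add_divide_distrib)
qed

lemma abs_div_sqrt_less:
  fixes p K M \<sigma> :: real
  assumes "0 < p" "\<bar>\<sigma>\<bar> = 1" "\<bar>K\<bar> < M * sqrt p"
  shows "\<bar>\<sigma> * K / (20 * p)\<bar> * sqrt p < M / 20"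
proof -
  have "\<bar>\<sigma> * K / (20 * p)\<bar> * sqrt p = \<bar>K\<bar> * sqrt p / (20 * p)"
    using assms(1,2) by (simp add: abs_mult abs_divide)
  also have "\<dots> < M * sqrt p * sqrt p / (20 * p)"
    using assms(1,3) by (intro divide_strict_right_mono mult_strict_right_mono) auto
  also have "\<dots> = M / 20"
    using assms(1) by (simp add: mult.assoc)
  finally show ?thesis .
qed

lemma golden_window:
  fixes Z s F :: real
  assumes "(Z - s) * (Z + s) = 1" "0 < s" "0 < Z" "phi \<le> F" "F \<le> phi * Z"
  shows "\<bar>(1 + sqrt 5) * Z - 2 * F\<bar> < (1 + sqrt 5) * s"
    and "\<bar>(sqrt 5 - 1) * Z - 2 / F\<bar> < (sqrt 5 - 1) * s"
proof -
  have "0 < phi"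
    using phi_gt_1 by simp
  note window = window_abs_less[OF assms(1-3) this assms(4,5)]
  have "(1 + sqrt 5) * Z - 2 * F = 2 * (phi * Z - F)"
    by (simp add: phi_def algebra_simps)
  then have "\<bar>(1 + sqrt 5) * Z - 2 * F\<bar> = 2 * \<bar>phi * Z - F\<bar>"
    by (simp only: abs_mult abs_numeral)
  also have "\<dots> < 2 * (phi * s)"
    using window(1) by simp
  also have "\<dots> = (1 + sqrt 5) * s"
    by (simp add: phi_def)
  finally show "\<bar>(1 + sqrt 5) * Z - 2 * F\<bar> < (1 + sqrt 5) * s" .
  have "(sqrt 5 - 1) * Z - 2 / F = 2 * (Z / phi - 1 / F)"
    unfolding divide_phi by (simp add: algebra_simps)
  then have "\<bar>(sqrt 5 - 1) * Z - 2 / F\<bar> = 2 * \<bar>Z / phi - 1 / F\<bar>"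
    by (simp only: abs_mult abs_numeral)
  also have "\<dots> < 2 * (s / phi)"
    using window(2) by simp
  also have "\<dots> = (sqrt 5 - 1) * s"
    unfolding divide_phi by simp
  finally show "\<bar>(sqrt 5 - 1) * Z - 2 / F\<bar> < (sqrt 5 - 1) * s" .
qed

locale odd_lucas_fibonacci =
  fixes N :: nat and X Y p r :: real
  assumes odd_N: "odd N" and three_le_N: "3 \<le> N"
    and X_xs: "X = real_of_int (xs N)" and Y_ys: "Y = real_of_int (ys N)"
    and p_Y: "p = Y\<^sup>2 - 1" and r_X: "r = X\<^sup>2 - 1"
begin

lemma X_phi: "X = phi ^ N - 1 / phi ^ N"
  using xs_odd[OF odd_N] by (simp add: X_xs)

lemma Y_phi: "sqrt 5 * Y = phi ^ N + 1 / phi ^ N"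
  using ys_odd[OF odd_N] by (simp add: Y_ys field_simps)

lemma X_Y_pell: "X\<^sup>2 = 5 * Y\<^sup>2 - 4"
proof -
  have "phi ^ N \<noteq> 0"
    using phi_gt_1 by simp
  then have "(sqrt 5 * Y)\<^sup>2 - X\<^sup>2 = 4"
    unfolding X_phi Y_phi by (simp add: power2_eq_square field_simps)
  then show ?thesis
    by (simp add: power_mult_distrib)
qed

lemma r_eq: "r = 5 * p"
  by (simp add: r_X p_Y X_Y_pell)

lemma one_less_Y: "1 < Y"
proof -
  have "phi\<^sup>2 \<le> phi ^ N"
    using three_le_N phi_gt_1 by (intro power_increasing) auto
  moreover have "0 < 1 / phi ^ N"
    using phi_gt_1 by simp
  ultimately have "sqrt 5 * 1 < sqrt 5 * Y"
    using sqrt5_less_phi_squared unfolding Y_phi by linarith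
  then show ?thesis
    by simp
qed

lemma p_pos: "0 < p"
  using one_less_Y by (simp add: p_Y)

lemma X_pos: "0 < X"
proof -
  have "1 < phi ^ N"
    using phi_gt_1 three_le_N by (intro one_less_power) auto
  then have "1 / phi ^ N < 1"
    by simp
  with \<open>1 < phi ^ N\<close> show ?thesis
    unfolding X_phi by linarith
qed

lemma Y_sqrt_p: "(Y - sqrt p) * (Y + sqrt p) = 1"
  using p_pos by (simp add: p_Y algebra_simps power2_eq_square)

lemma X_sqrt_5p: "(X - sqrt 5 * sqrt p) * (X + sqrt 5 * sqrt p) = 1"
proof -
  have "(X - sqrt 5 * sqrt p) * (X + sqrt 5 * sqrt p) = X\<^sup>2 - 5 * p"
    using p_pos by (simp add: algebra_simps power2_eq_square)
  then show ?thesis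
    by (simp add: p_Y X_Y_pell)
qed

lemma sqrt_p_less_Y: "sqrt p < Y"
  using one_less_Y by (intro real_less_lsqrt) (simp_all add: p_Y)

lemma sqrt_5p_less_X: "sqrt 5 * sqrt p < X"
  unfolding real_sqrt_mult[symmetric] using X_pos by (intro real_less_lsqrt) (simp_all add: p_Y X_Y_pell)

lemma phi_power_bounds:
  assumes "0 < m" "m < N"
  shows "phi \<le> phi ^ m" "phi ^ m \<le> phi * X" "phi ^ m \<le> phi * Y"
proof -
  show "phi \<le> phi ^ m"
    using power_increasing[of 1 m phi] assms(1) phi_gt_1 by simp
  define F where "F = phi ^ (N - 1)"
  have m_F: "phi ^ m \<le> F"
    unfolding F_def using assms phi_gt_1 by (intro power_increasing) auto
  have N_F: "phi ^ N = phi * F"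
    unfolding F_def using assms by (cases N) auto
  have "1 \<le> F"
    unfolding F_def using phi_gt_1 by simp
  have "phi * X = phi\<^sup>2 * F - 1 / F"
    unfolding X_phi N_F using phi_gt_1 by (simp add: power2_eq_square field_simps)
  also have "\<dots> = F + (phi * F - 1 / F)"
    by (simp add: phi_squared algebra_simps)
  finally have "phi * X = F + (phi * F - 1 / F)" .
  moreover have "1 \<le> phi * F"
    using mult_mono[of 1 phi 1 F] phi_gt_1 \<open>1 \<le> F\<close> by simp
  moreover have "1 / F \<le> 1"
    using \<open>1 \<le> F\<close> by simp
  ultimately have "F \<le> phi * X"
    by linarith
  with m_F show "phi ^ m \<le> phi * X"
    by simp
  have "sqrt 5 * (phi * Y) = phi\<^sup>2 * F + 1 / F"
    using Y_phi phi_gt_1 unfolding N_F by (simp add: power2_eq_square field_simps)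
  moreover have "sqrt 5 * F < phi\<^sup>2 * F"
    using sqrt5_less_phi_squared \<open>1 \<le> F\<close> by (intro mult_strict_right_mono) auto
  moreover have "0 < 1 / F"
    using \<open>1 \<le> F\<close> by simp
  ultimately have "sqrt 5 * F < sqrt 5 * (phi * Y)"
    by linarith
  then have "F < phi * Y"
    by simp
  with m_F show "phi ^ m \<le> phi * Y"
    by simp
qed

lemma totally_positiveI:
  assumes "\<bar>c + d * sqrt 5\<bar> * sqrt p < a + b * sqrt 5"
    and "\<bar>c + d * - sqrt 5\<bar> * sqrt p < a + b * - sqrt 5"
  shows "totally_positive p r a b c d"
  using assms p_pos by (auto simp: totally_positive_iff[OF _ r_eq])

lemma totally_positive_rho: "totally_positive p r ((X + Y) / 2) 0 (- 1 / 2) (1 / 2)"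
proof -
  have bound: "\<bar>- 1 / 2 + 1 / 2 * u\<bar> * sqrt p < (X + Y) / 2 + 0 * u"
    if "u \<in> {sqrt 5, - sqrt 5}" for u
  proof -
    have "\<bar>- 1 / 2 + 1 / 2 * u\<bar> \<le> (1 + sqrt 5) / 2"
      using that sqrt5_gt_2 by auto
    then have "\<bar>- 1 / 2 + 1 / 2 * u\<bar> * sqrt p \<le> (1 + sqrt 5) / 2 * sqrt p"
      using p_pos by (intro mult_right_mono) simp_all
    also have "\<dots> = (sqrt p + sqrt 5 * sqrt p) / 2"
      by (simp add: algebra_simps)
    also have "\<dots> < (X + Y) / 2"
      using sqrt_p_less_Y sqrt_5p_less_X by simp
    finally show ?thesis
      by simp
  qed
  show ?thesis
    by (rule totally_positiveI; rule bound) simp_all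
qed

lemma totally_positive_gamma:
  assumes "odd m" "\<bar>e\<bar> = 1"
  shows "totally_positive p r
    ((real_of_int (ys m) * X + 1) / 2) ((real_of_int (xs m) * X - e) / 10)
    (e * real_of_int (xs m) / 2) (e * real_of_int (ys m) / 2)"
proof -
  define F x y where "F = phi ^ m" and "x = real_of_int (xs m)" and "y = real_of_int (ys m)"
  have xy: "x = F - 1 / F" "y = (F + 1 / F) / sqrt 5"
    using xs_odd[OF assms(1)] ys_odd[OF assms(1)] by (simp_all add: F_def x_def y_def)
  have "0 < F"
    using phi_gt_1 by (simp add: F_def)
  have bound: "\<bar>e' * G\<bar> * sqrt p < G * (X / sqrt 5) + (5 - e' * sqrt 5) / 10"
    if "0 < G" "\<bar>e'\<bar> = 1" for G e'
  proof -
    have "sqrt p < X / sqrt 5"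
      using sqrt_5p_less_X by (simp add: field_simps)
    then have "G * sqrt p < G * (X / sqrt 5)"
      using that(1) by (rule mult_strict_left_mono)
    moreover have "0 < (5 - e' * sqrt 5) / 10"
      using that(2) sqrt5_lt_3 sqrt5_gt_2 by (auto simp: abs_if split: if_splits)
    moreover have "\<bar>e' * G\<bar> * sqrt p = G * sqrt p"
      using that by (simp add: abs_mult)
    ultimately show ?thesis
      by linarith
  qed
  txt \<open>The embedding u = -sqrt 5 is the embedding u = sqrt 5 with F, e replaced by 1/F, -e.\<close>
  have "e * x / 2 + e * y / 2 * sqrt 5 = e * F"
    "(y * X + 1) / 2 + (x * X - e) / 10 * sqrt 5 = F * (X / sqrt 5) + (5 - e * sqrt 5) / 10"
    unfolding xy using \<open>0 < F\<close> by (simp_all add: field_simps)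
  then have "\<bar>e * x / 2 + e * y / 2 * sqrt 5\<bar> * sqrt p < (y * X + 1) / 2 + (x * X - e) / 10 * sqrt 5"
    using bound[OF \<open>0 < F\<close> assms(2)] by (simp only:)
  moreover have "e * x / 2 + e * y / 2 * - sqrt 5 = - e * (1 / F)"
    "(y * X + 1) / 2 + (x * X - e) / 10 * - sqrt 5 = (1 / F) * (X / sqrt 5) + (5 - - e * sqrt 5) / 10"
    unfolding xy using \<open>0 < F\<close> by (simp_all add: field_simps)
  then have "\<bar>e * x / 2 + e * y / 2 * - sqrt 5\<bar> * sqrt p < (y * X + 1) / 2 + (x * X - e) / 10 * - sqrt 5"
    using bound[of "1 / F" "- e"] \<open>0 < F\<close> assms(2) by simp
  ultimately show ?thesis
    unfolding x_def y_def by (rule totally_positiveI)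
qed

lemma totally_positive_delta_A: "totally_positive p r (1 / 4) (- 1 / 20) 0 (- 1 / (5 * (X + Y)))"
proof -
  have "0 < X + Y"
    using X_pos one_less_Y by simp
  have "(5 - sqrt 5) * (sqrt 5 * sqrt p + sqrt p) < (5 - sqrt 5) * (X + Y)"
    using sqrt_p_less_Y sqrt_5p_less_X sqrt5_lt_3 by (intro mult_strict_left_mono) auto
  then have sqrt_p_bound: "sqrt 5 * sqrt p / (5 * (X + Y)) < (5 - sqrt 5) / 20"
    using \<open>0 < X + Y\<close> by (simp add: field_simps)
  have bound: "\<bar>0 + - 1 / (5 * (X + Y)) * u\<bar> * sqrt p < 1 / 4 + - 1 / 20 * u"
    if "u \<in> {sqrt 5, - sqrt 5}" for u
  proof -
    have "\<bar>0 + - 1 / (5 * (X + Y)) * u\<bar> * sqrt p = sqrt 5 * sqrt p / (5 * (X + Y))"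
      using that \<open>0 < X + Y\<close> by (auto simp: abs_mult)
    also have "\<dots> < (5 - sqrt 5) / 20"
      by (fact sqrt_p_bound)
    also have "\<dots> \<le> 1 / 4 + - 1 / 20 * u"
      using that by auto
    finally show ?thesis .
  qed
  show ?thesis
    by (rule totally_positiveI; rule bound) simp_all
qed

lemma X_xs_ys_bounds:
  assumes "odd m" "m < N" "w \<in> {sqrt 5, - sqrt 5}"
  defines "x \<equiv> real_of_int (xs m)" and "y \<equiv> real_of_int (ys m)"
  shows "\<bar>(X - x) - w * (X - y)\<bar> < (5 - w) * sqrt p"
proof -
  define F where "F = phi ^ m"
  have xy: "x = F - 1 / F" "y = (F + 1 / F) / sqrt 5"
    using xs_odd[OF assms(1)] ys_odd[OF assms(1)] by (simp_all add: F_def x_def y_def)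
  have "0 < F"
    using phi_gt_1 by (simp add: F_def)
  have "0 < sqrt 5 * sqrt p"
    using p_pos by simp
  note window = golden_window[OF X_sqrt_5p this X_pos
      phi_power_bounds(1,2)[OF odd_pos[OF assms(1)] assms(2), folded F_def]]
  have "(X - x) - sqrt 5 * (X - y) = - ((sqrt 5 - 1) * X - 2 / F)"
    unfolding xy using \<open>0 < F\<close> by (simp add: field_simps)
  then have "\<bar>(X - x) - sqrt 5 * (X - y)\<bar> = \<bar>(sqrt 5 - 1) * X - 2 / F\<bar>"
    by (simp only: abs_minus_cancel)
  also have "\<dots> < (sqrt 5 - 1) * (sqrt 5 * sqrt p)"
    by (fact window(2))
  also have "\<dots> = (5 - sqrt 5) * sqrt p"
    by (simp add: algebra_simps)
  finally have plus: "\<bar>(X - x) - sqrt 5 * (X - y)\<bar> < (5 - sqrt 5) * sqrt p" .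
  have "(X - x) - - sqrt 5 * (X - y) = (1 + sqrt 5) * X - 2 * F"
    unfolding xy using \<open>0 < F\<close> by (simp add: field_simps)
  then have "\<bar>(X - x) - - sqrt 5 * (X - y)\<bar> < (1 + sqrt 5) * (sqrt 5 * sqrt p)"
    using window(1) by simp
  also have "\<dots> = (5 - - sqrt 5) * sqrt p"
    by (simp add: algebra_simps)
  finally have minus: "\<bar>(X - x) - - sqrt 5 * (X - y)\<bar> < (5 - - sqrt 5) * sqrt p" .
  from assms(3) plus minus show ?thesis
    by blast
qed

lemma totally_positive_delta_B:
  assumes "odd m" "m < N" "\<bar>\<sigma>\<bar> = 1"
  shows "totally_positive p r (1 / 4) (- 1 / 20)
    (\<sigma> * (X - real_of_int (xs m)) / (20 * p)) (- \<sigma> * (X - real_of_int (ys m)) / (4 * r))"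
proof -
  define x y where "x = real_of_int (xs m)" and "y = real_of_int (ys m)"
  have bound: "\<bar>\<sigma> * (X - x) / (20 * p) + - \<sigma> * (X - y) / (4 * r) * u\<bar> * sqrt p < 1 / 4 + - 1 / 20 * u"
    if "u \<in> {sqrt 5, - sqrt 5}" for u
  proof -
    have "\<bar>\<sigma> * ((X - x) - u * (X - y)) / (20 * p)\<bar> * sqrt p < (5 - u) / 20"
      using X_xs_ys_bounds[OF assms(1,2) that, folded x_def y_def]
      by (rule abs_div_sqrt_less[OF p_pos assms(3)])
    moreover have "\<sigma> * (X - x) / (20 * p) + - \<sigma> * (X - y) / (4 * r) * u
        = \<sigma> * ((X - x) - u * (X - y)) / (20 * p)"
      "1 / 4 + - 1 / 20 * u = (5 - u) / 20"
      using p_pos by (simp_all add: r_eq field_simps)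
    ultimately show ?thesis
      by (simp only:)
  qed
  show ?thesis
    unfolding x_def[symmetric] y_def[symmetric] by (rule totally_positiveI; rule bound) simp_all
qed

lemma Y_xs_ys_bounds:
  assumes "odd m" "m < N" "w \<in> {sqrt 5, - sqrt 5}"
  defines "x \<equiv> real_of_int (xs m)" and "y \<equiv> real_of_int (ys m)"
  shows "\<bar>5 * (Y - y) + w * (Y - x)\<bar> < (5 + w) * sqrt p"
proof -
  define F where "F = phi ^ m"
  have xy: "x = F - 1 / F" "y = (F + 1 / F) / sqrt 5"
    using xs_odd[OF assms(1)] ys_odd[OF assms(1)] by (simp_all add: F_def x_def y_def)
  have "0 < F"
    using phi_gt_1 by (simp add: F_def)
  have "0 < sqrt p" "0 < Y"
    using p_pos one_less_Y by simp_all
  note window = golden_window[OF Y_sqrt_p this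
      phi_power_bounds(1,3)[OF odd_pos[OF assms(1)] assms(2), folded F_def]]
  have "5 * (Y - y) + sqrt 5 * (Y - x) = sqrt 5 * ((1 + sqrt 5) * Y - 2 * F)"
    unfolding xy using \<open>0 < F\<close> by (simp add: field_simps)
  then have "\<bar>5 * (Y - y) + sqrt 5 * (Y - x)\<bar> < sqrt 5 * ((1 + sqrt 5) * sqrt p)"
    using window(1) by (simp add: abs_mult)
  also have "\<dots> = (5 + sqrt 5) * sqrt p"
    by (simp add: algebra_simps)
  finally have plus: "\<bar>5 * (Y - y) + sqrt 5 * (Y - x)\<bar> < (5 + sqrt 5) * sqrt p" .
  have "5 * (Y - y) + - sqrt 5 * (Y - x) = sqrt 5 * ((sqrt 5 - 1) * Y - 2 / F)"
    unfolding xy using \<open>0 < F\<close> by (simp add: field_simps)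
  then have "\<bar>5 * (Y - y) + - sqrt 5 * (Y - x)\<bar> < sqrt 5 * ((sqrt 5 - 1) * sqrt p)"
    using window(2) by (simp add: abs_mult)
  also have "\<dots> = (5 + - sqrt 5) * sqrt p"
    by (simp add: algebra_simps)
  finally have minus: "\<bar>5 * (Y - y) + - sqrt 5 * (Y - x)\<bar> < (5 + - sqrt 5) * sqrt p" .
  from assms(3) plus minus show ?thesis
    by blast
qed

lemma totally_positive_delta_C:
  assumes "odd m" "m < N" "\<bar>\<sigma>\<bar> = 1"
  shows "totally_positive p r (1 / 4) (\<sigma> / 20)
    (- (Y - real_of_int (ys m)) / (4 * p)) (- \<sigma> * (Y - real_of_int (xs m)) / (4 * r))"
proof -
  define x y where "x = real_of_int (xs m)" and "y = real_of_int (ys m)"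
  have bound: "\<bar>- (Y - y) / (4 * p) + - \<sigma> * (Y - x) / (4 * r) * u\<bar> * sqrt p < 1 / 4 + \<sigma> / 20 * u"
    if "u \<in> {sqrt 5, - sqrt 5}" for u
  proof -
    have "\<sigma> * u \<in> {sqrt 5, - sqrt 5}"
      using that assms(3) by (auto simp: abs_if split: if_splits)
    note Y_xs_ys_bounds[OF assms(1,2) this, folded x_def y_def]
    then have "\<bar>(- 1) * (5 * (Y - y) + (\<sigma> * u) * (Y - x)) / (20 * p)\<bar> * sqrt p < (5 + \<sigma> * u) / 20"
      by (intro abs_div_sqrt_less[OF p_pos]) simp_all
    moreover have "- (Y - y) / (4 * p) + - \<sigma> * (Y - x) / (4 * r) * u
        = (- 1) * (5 * (Y - y) + (\<sigma> * u) * (Y - x)) / (20 * p)"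
      "1 / 4 + \<sigma> / 20 * u = (5 + \<sigma> * u) / 20"
      using p_pos by (simp_all add: r_eq field_simps)
    ultimately show ?thesis
      by (simp only:)
  qed
  show ?thesis
    unfolding x_def[symmetric] y_def[symmetric] by (rule totally_positiveI; rule bound) simp_all
qed

end

theorem proposition4p2:
  fixes n :: nat and X Y p r :: real
  defines "X \<equiv> real_of_int (xs (12 * n + 3))"
      and "Y \<equiv> real_of_int (ys (12 * n + 3))"
      and "p \<equiv> Y ^ 2 - 1"
      and "r \<equiv> X ^ 2 - 1"
  assumes "squarefree (ys (12 * n + 3) ^ 2 - 1)"
      and "squarefree (xs (12 * n + 3) ^ 2 - 1)"
  shows "totally_positive p r 1 0 0 0
    \<and> totally_positive p r ((X + Y) / 2) 0 (- 1 / 2) (1 / 2)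
    \<and> (\<forall>j \<in> {1 .. 6 * n + 1}.
         totally_positive p r
           ((real_of_int (ys (2 * j - 1)) * X + 1) / 2)
           ((real_of_int (xs (2 * j - 1)) * X - (- 1) ^ j) / 10)
           ((- 1) ^ j * real_of_int (xs (2 * j - 1)) / 2)
           ((- 1) ^ j * real_of_int (ys (2 * j - 1)) / 2))
    \<and> totally_positive p r (1 / 4) (- 1 / 20) 0 (- 1 / (5 * (X + Y)))
    \<and> (\<forall>j \<in> {1 .. 3 * n}. \<forall>\<sigma> \<in> {1, -1 :: real}.
         totally_positive p r (1 / 4) (- 1 / 20)
           (\<sigma> * (X - real_of_int (xs (4 * j - 1))) / (20 * p))
           (- \<sigma> * (X - real_of_int (ys (4 * j - 1))) / (4 * r)))
    \<and> (\<forall>j \<in> {1 .. 6 * n + 1}. \<forall>\<sigma> \<in> {1, -1 :: real}.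
         totally_positive p r (1 / 4) (\<sigma> / 20)
           (- (Y - real_of_int (ys (2 * j - 1))) / (4 * p))
           (- \<sigma> * (Y - real_of_int (xs (2 * j - 1))) / (4 * r)))"
proof -
  txt \<open>The squarefreeness hypotheses only make K a biquadratic field; positivity of the
    conjugates does not need them.\<close>
  interpret odd_lucas_fibonacci "12 * n + 3" X Y p r
    by unfold_locales (simp_all add: X_def Y_def p_def r_def)
  have "totally_positive p r 1 0 0 0"
    by (simp add: totally_positive_def conjK_def)
  moreover have "odd (2 * j - 1)" "2 * j - 1 < 12 * n + 3" if "j \<in> {1 .. 6 * n + 1}" for j
    using that by auto
  moreover have "odd (4 * j - 1)" "4 * j - 1 < 12 * n + 3" if "j \<in> {1 .. 3 * n}" for j
    using that by auto
  ultimately show ?thesis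
    by (intro conjI ballI totally_positive_rho totally_positive_gamma totally_positive_delta_A
        totally_positive_delta_B totally_positive_delta_C) auto
qed
end
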